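(* Let $n\ge 3$ and let $C=(c_1,\dots,c_k)$, $k\ge 3$, be a circuit of the complete graph $K_n$. Define \[L_C=\sum_{1\le i<j\le k}(-1)^{i+j}\,(x_{t(c_i)}-x_{s(c_i)})\,\omega_{C\setminus\{c_i,c_j\}},\qquad L'_C=\sum_{1\le i<j\le k}(-1)^{i+j}\,(y_{t(c_i)}-y_{s(c_i)})\,\omega_{C\setminus\{c_i,c_j\}}\] in $E_2^{1,k-2}$. Then $d_2(L_C)=0$ and $d_2(L'_C)=0$, i.e. $L_C,L'_C\in\ker d_2^{1,k-2}$.
   Context: Let $E$ be a complex elliptic curve, $x,y$ a basis of $H^1(E;\mathbb{Q})$ with $xy$ generating $H^2(E;\mathbb{Q})$. Let $C(n)=\{(P_1,\dots,P_n)\in E^n\mid P_i\neq P_j \text{ for } i\neq j\}$ be the complement of the braid elliptic arrangement. Let $E_2=E_2^{\bullet,\bullet}$ be the second page (with differential $d_2$) of the Leray spectral sequence, with rational coefficients, of the inclusion $C(n)\hookrightarrow E^n$. It is the bigraded differential algebra given as the quotient of the free graded-commutative algebra (graded commutative with respect to total degree $p+q$) over $\mathbb{Q}$ on generators $x_i,y_i$ ($1\le i\le n$) of bidegree $(1,0)$ and $\omega_{ij}=\omega_{ji}$ ($1\le i\neq j\le n$) of bidegree $(0,1)$ by the relations $(x_i-x_j)\omega_{ij}=0$, $(y_i-y_j)\omega_{ij}=0$, and $\omega_{ij}\omega_{jk}+\omega_{jk}\omega_{ki}+\omega_{ki}\omega_{ij}=0$ for distinct $i,j,k$; here $x_i,y_i$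 are the pullbacks of $x,y$ along the $i$-th projection $E^n\to E$. The differential $d_2$ has bidegree $(2,-1)$, is a derivation for the total degree (graded Leibniz rule), vanishes on $x_i,y_i$, and $d_2\omega_{ij}=(x_i-x_j)(y_i-y_j)$. A circuit of length $k\ge3$ in $K_n$ is a sequence $C=(c_1,\dots,c_k)$ of oriented edges, with source $s(c)$ and target $t(c)$, such that $t(c_i)=s(c_{i+1})$ for $i<k$, $t(c_k)=s(c_1)$ and the $s(c_i)$ are pairwise distinct. For an oriented edge $c$ put $\omega_c=\omega_{s(c),t(c)}$, and for a subsequence $C\setminus\{c_i,c_j\}$ let $\omega_{C\setminus\{c_i,c_j\}}$ be the product of the $\omega_{c_m}$, $m\notin\{i,j\}$, in increasing order of $m$. *)

theory Defs
  imports Complex_Main "HOL-Library.Nat_Bijection"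
begin

text \<open>Generators of the free graded-commutative algebra: x_i, y_i and omega_ij (stored with i<j).
 All generators have odd total degree 1, so the free graded-commutative algebra over Q on them
 is the exterior algebra.  Elements are represented by their coefficient functions on
 basis monomials, a monomial being a set of generators (product taken in increasing order of gcode).\<close>

datatype gen = X nat | Y nat | W nat nat

fun gcode :: "gen \<Rightarrow> nat" where
  "gcode (X i) = 3 * i"
| "gcode (Y i) = 3 * i + 1"
| "gcode (W i j) = 3 * prod_encode (i, j) + 2"

type_synonym ext = "gen set \<Rightarrow> rat"

definition gens :: "nat \<Rightarrow> gen set" where
  "gens n = {X i | i. i \<in> {1..n}} \<union> {Y i | i. i \<in> {1..n}}
            \<union> {W i j | i j. 1 \<le> i \<and> i < j \<and> j \<le> n}"

definition ezero :: ext where "ezero = (\<lambda>S. 0)"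
definition eone :: ext where "eone = (\<lambda>S. if S = {} then 1 else 0)"
definition mon :: "gen set \<Rightarrow> ext" where "mon S = (\<lambda>T. if T = S then 1 else 0)"
definition eadd :: "ext \<Rightarrow> ext \<Rightarrow> ext" where "eadd f g = (\<lambda>S. f S + g S)"
definition esub :: "ext \<Rightarrow> ext \<Rightarrow> ext" where "esub f g = (\<lambda>S. f S - g S)"
definition esc :: "rat \<Rightarrow> ext \<Rightarrow> ext" where "esc r f = (\<lambda>S. r * f S)"
definition esum :: "('a \<Rightarrow> ext) \<Rightarrow> 'a set \<Rightarrow> ext" where
  "esum F A = (\<lambda>S. \<Sum>a\<in>A. F a S)"

text \<open>sign of e_S * e_T = sign * e_(S union T) for disjoint S, T\<close>
definition esign :: "gen set \<Rightarrow> gen set \<Rightarrow> rat" where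
  "esign S T = (-1) ^ card {(a, b). a \<in> S \<and> b \<in> T \<and> gcode b < gcode a}"

definition emult :: "ext \<Rightarrow> ext \<Rightarrow> ext" where
  "emult f g = (\<lambda>U. if finite U then (\<Sum>S\<in>Pow U. f S * g (U - S) * esign S (U - S)) else 0)"

definition eprod :: "ext list \<Rightarrow> ext" where
  "eprod fs = foldr emult fs eone"

definition xg :: "nat \<Rightarrow> ext" where "xg i = mon {X i}"
definition yg :: "nat \<Rightarrow> ext" where "yg i = mon {Y i}"
definition wg :: "nat \<Rightarrow> nat \<Rightarrow> ext" where "wg i j = mon {W (min i j) (max i j)}"

definition finsupp :: "nat \<Rightarrow> ext \<Rightarrow> bool" where
  "finsupp n f \<longleftrightarrow> finite {S. f S \<noteq> 0} \<and> (\<forall>S. f S \<noteq> 0 \<longrightarrow> S \<subseteq> gens n)"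

definition rels :: "nat \<Rightarrow> ext set" where
  "rels n =
     {emult (esub (xg i) (xg j)) (wg i j) | i j. i \<in> {1..n} \<and> j \<in> {1..n} \<and> i \<noteq> j}
   \<union> {emult (esub (yg i) (yg j)) (wg i j) | i j. i \<in> {1..n} \<and> j \<in> {1..n} \<and> i \<noteq> j}
   \<union> {eadd (eadd (emult (wg i j) (wg j k)) (emult (wg j k) (wg k i))) (emult (wg k i) (wg i j))
       | i j k. i \<in> {1..n} \<and> j \<in> {1..n} \<and> k \<in> {1..n} \<and> i \<noteq> j \<and> j \<noteq> k \<and> i \<noteq> k}"

text \<open>ideal generated by the relations in the free algebra on the generators with indices in 1..n
 (relations are homogeneous, so left ideal = two-sided ideal)\<close>
inductive_set rel_ideal :: "nat \<Rightarrow> ext set" for n where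
  zero: "ezero \<in> rel_ideal n"
| gen: "finsupp n a \<Longrightarrow> r \<in> rels n \<Longrightarrow> emult a r \<in> rel_ideal n"
| add: "p \<in> rel_ideal n \<Longrightarrow> q \<in> rel_ideal n \<Longrightarrow> eadd p q \<in> rel_ideal n"

fun dgen :: "gen \<Rightarrow> ext" where
  "dgen (X i) = ezero"
| "dgen (Y i) = ezero"
| "dgen (W i j) = emult (esub (xg i) (xg j)) (esub (yg i) (yg j))"

definition dmon :: "gen set \<Rightarrow> ext" where
  "dmon S = esum (\<lambda>g. esc ((-1) ^ card {h \<in> S. gcode h < gcode g})
                          (emult (dgen g) (mon (S - {g})))) S"

definition d2 :: "ext \<Rightarrow> ext" where
  "d2 f = esum (\<lambda>S. esc (f S) (dmon S)) {S. f S \<noteq> 0}"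

text \<open>circuits of K_n: list of oriented edges (source, target)\<close>
definition circuit :: "nat \<Rightarrow> (nat \<times> nat) list \<Rightarrow> bool" where
  "circuit n cs \<longleftrightarrow> length cs \<ge> 3
     \<and> (\<forall>c \<in> set cs. fst c \<in> {1..n} \<and> snd c \<in> {1..n} \<and> fst c \<noteq> snd c)
     \<and> (\<forall>i. i + 1 < length cs \<longrightarrow> snd (cs ! i) = fst (cs ! (i + 1)))
     \<and> snd (cs ! (length cs - 1)) = fst (cs ! 0)
     \<and> distinct (map fst cs)"

text \<open>omega_{C minus {c_i, c_j}} with 1-based indices i, j\<close>
definition omega_minus :: "(nat \<times> nat) list \<Rightarrow> nat \<Rightarrow> nat \<Rightarrow> ext" where
  "omega_minus cs i j =
     eprod (map (\<lambda>m. wg (fst (cs ! (m - 1))) (snd (cs ! (m - 1))))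
                (filter (\<lambda>m. m \<noteq> i \<and> m \<noteq> j) [1..<length cs + 1]))"

definition L_C :: "(nat \<Rightarrow> ext) \<Rightarrow> (nat \<times> nat) list \<Rightarrow> ext" where
  "L_C v cs = esum (\<lambda>(i, j). esc ((-1) ^ (i + j))
        (emult (esub (v (snd (cs ! (i - 1)))) (v (fst (cs ! (i - 1))))) (omega_minus cs i j)))
     {(i, j). 1 \<le> i \<and> i < j \<and> j \<le> length cs}"

end

theory Submission
  imports Defs
begin

(*
  By the Leibniz rule d2 L_C is a
  signed sum of terms v_i (d2 omega_m) omega_U with U = C - {c_i, c_j, c_m}; grouping them by
  the set {p < q < r} of removed edges gives, up to sign,
  (v_p dw_r - v_p dw_q + v_q dw_p) omega_U.  The differences a_l = x_t(c_l) - x_s(c_l)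
  telescope to zero around the circuit, and a_l omega_U lies in the ideal for l in U by the
  relation (x_i - x_j) omega_ij = 0; hence (a_p + a_q + a_r) omega_U lies in the ideal, and
  likewise for the y-differences b_l.  An identity in the exterior algebra writes each group as
  a combination of these two elements.
*)

lemma neg1_power_commute: "(-1) ^ k * (z :: 'a :: ring_1) = z * (-1) ^ k"
  by (induction k) (auto simp: algebra_simps)

lemma mult_neg1_power_left: "z * ((-1) ^ k * y) = (-1) ^ k * (z * (y :: 'a :: ring_1))"
  by (metis mult.assoc neg1_power_commute)

lemma neg1_power_mult_self: "(-1) ^ k * ((-1) ^ k * x) = (x :: 'a :: ring_1)"
  by (simp add: mult.assoc[symmetric] flip: power_add)

lemma mult_commute_of_anticommute:
  fixes x y z :: "'a :: ring"
  assumes "x * z = - (z * x)" and "y * z = - (z * y)"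
  shows "(x * y) * z = z * (x * y)"
proof -
  have "(x * y) * z = - ((x * z) * y)" by (simp add: mult.assoc assms(2))
  also have "\<dots> = z * (x * y)" by (simp add: assms(1) mult.assoc)
  finally show ?thesis .
qed

lemma mult_prod_list_commute:
  fixes c :: "'a :: monoid_mult"
  assumes "\<And>z. z \<in> set zs \<Longrightarrow> c * z = z * c"
  shows "c * prod_list zs = prod_list zs * c"
  using assms by (induction zs) (simp_all, metis mult.assoc)

lemma three_term_identity:
  fixes ap aq ar bp bq br :: "'a :: ring"
  assumes "ap * ap = 0" and "aq * ap = - (ap * aq)"
    and "(ap + aq + ar) * br = - (br * (ap + aq + ar))"
  shows "ap * (ar * br) - ap * (aq * bq) + aq * (ap * bp) =
    - (ap * (br * (ap + aq + ar))) - ap * (aq * (bp + bq + br))"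
proof -
  have "ap * (ap * x) = 0" for x using assms(1) by (simp flip: mult.assoc)
  moreover have "aq * (ap * x) = - (ap * (aq * x))" for x using assms(2) by (simp flip: mult.assoc)
  moreover have "- (ap * (br * (ap + aq + ar))) = ap * ((ap + aq + ar) * br)" using assms(3) by simp
  ultimately show ?thesis by (simp add: algebra_simps)
qed

lemma Sigma_pairs_third_eq:
  fixes K :: "'a :: linorder set"
  defines "T \<equiv> {(p, q, r). p \<in> K \<and> q \<in> K \<and> r \<in> K \<and> p < q \<and> q < r}"
  shows "Sigma {(i, j). i \<in> K \<and> j \<in> K \<and> i < j} (\<lambda>(i, j). K - {i, j}) =
    (\<lambda>(p, q, r). ((p, q), r)) ` T \<union> (\<lambda>(p, q, r). ((p, r), q)) ` T \<union> (\<lambda>(p, q, r). ((q, r), p)) ` T"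
    (is "?S = ?R")
proof (intro equalityI subsetI)
  fix x assume "x \<in> ?S"
  then obtain i j m where x: "x = ((i, j), m)" "i \<in> K" "j \<in> K" "m \<in> K" "i < j" "m \<noteq> i" "m \<noteq> j"
    by auto
  consider "j < m" | "i < m" "m < j" | "m < i" using x by (auto simp: neq_iff)
  then show "x \<in> ?R"
  proof cases
    case 1
    then show ?thesis using x by (auto simp: T_def image_iff)
  next
    case 2
    then show ?thesis using x by (auto simp: T_def image_iff intro!: bexI[of _ "(i, m, j)"])
  next
    case 3
    then show ?thesis using x by (auto simp: T_def image_iff intro!: bexI[of _ "(m, i, j)"])
  qed
qed (auto simp: T_def)

lemma sum_pairs_third_regroup:
  fixes h :: "'b :: linorder \<Rightarrow> 'b \<Rightarrow> 'b \<Rightarrow> 'a :: comm_monoid_add"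
  assumes "finite K"
  shows "(\<Sum>(i, j) \<in> {(i, j). i \<in> K \<and> j \<in> K \<and> i < j}. \<Sum>m \<in> K - {i, j}. h i j m) =
    (\<Sum>(p, q, r) \<in> {(p, q, r). p \<in> K \<and> q \<in> K \<and> r \<in> K \<and> p < q \<and> q < r}.
       h p q r + h p r q + h q r p)"
proof -
  let ?P = "{(i, j). i \<in> K \<and> j \<in> K \<and> i < j}"
  let ?T = "{(p, q, r). p \<in> K \<and> q \<in> K \<and> r \<in> K \<and> p < q \<and> q < r}"
  define hh where "hh = (\<lambda>((i, j), m). h i j m)"
  define f1 f2 f3 :: "'b \<times> 'b \<times> 'b \<Rightarrow> ('b \<times> 'b) \<times> 'b" where
    "f1 = (\<lambda>(p, q, r). ((p, q), r))" and "f2 = (\<lambda>(p, q, r). ((p, r), q))"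
    and "f3 = (\<lambda>(p, q, r). ((q, r), p))"
  have finP: "finite ?P"
    by (rule finite_subset[of _ "K \<times> K"]) (use assms in auto)
  have finT: "finite ?T"
    by (rule finite_subset[of _ "K \<times> K \<times> K"]) (use assms in auto)
  have inj: "inj_on f1 ?T" "inj_on f2 ?T" "inj_on f3 ?T"
    by (auto simp: inj_on_def f1_def f2_def f3_def)
  let ?B = "\<lambda>(i, j). K - {i, j}"
  have "(\<Sum>(i, j) \<in> ?P. \<Sum>m \<in> K - {i, j}. h i j m) = (\<Sum>x\<in>?P. \<Sum>m\<in>?B x. hh (x, m))"
    by (rule sum.cong) (auto simp: hh_def)
  also have "\<dots> = sum hh (Sigma ?P ?B)"
    using finP assms by (subst sum.Sigma) auto
  also have "\<dots> = sum (hh \<circ> f1) ?T + sum (hh \<circ> f2) ?T + sum (hh \<circ> f3) ?T"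
    unfolding Sigma_pairs_third_eq f1_def[symmetric] f2_def[symmetric] f3_def[symmetric]
    using finT inj by (subst sum.union_disjoint sum.reindex, auto simp: f1_def f2_def f3_def)+
  also have "\<dots> = (\<Sum>(p, q, r) \<in> ?T. h p q r + h p r q + h q r p)"
    by (simp add: sum.distrib[symmetric] hh_def f1_def f2_def f3_def split_def)
  finally show ?thesis .
qed

section \<open>Ordered products of anticommuting elements\<close>

definition ordered_prod :: "(nat \<Rightarrow> 'a :: monoid_mult) \<Rightarrow> nat set \<Rightarrow> 'a" where
  "ordered_prod w T = prod_list (map w (sorted_list_of_set T))"

definition count_below :: "nat set \<Rightarrow> nat \<Rightarrow> nat" where
  "count_below T m = card {l \<in> T. l < m}"

lemma ordered_prod_empty [simp]: "ordered_prod w {} = 1"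
  by (simp add: ordered_prod_def)

lemma ordered_prod_insert_min:
  assumes "finite A" "\<forall>a\<in>A. b < a"
  shows "ordered_prod w (insert b A) = w b * ordered_prod w A"
proof -
  have "A - {b} = A" using assms by auto
  then have "sorted_list_of_set (insert b A) = b # sorted_list_of_set A"
    using assms by (simp add: insort_is_Cons less_imp_le)
  then show ?thesis by (simp add: ordered_prod_def)
qed

lemma count_below_insert_min:
  assumes "finite A" "\<forall>a\<in>A. b < a"
  shows "count_below (insert b A) b = 0"
    and "m \<in> A \<Longrightarrow> count_below (insert b A) m = Suc (count_below A m)"
proof -
  show "count_below (insert b A) b = 0"
    using assms by (auto simp: count_below_def)
  assume "m \<in> A"
  then have "{l \<in> insert b A. l < m} = insert b {l \<in> A. l < m}" and "b \<notin> {l \<in> A. l < m}"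
    using assms by auto
  then show "count_below (insert b A) m = Suc (count_below A m)"
    using assms by (simp add: count_below_def)
qed

lemma ordered_prod_extract:
  fixes w :: "nat \<Rightarrow> 'a :: ring_1"
  assumes "finite T" "m \<in> T" and anticomm: "\<And>l l'. w l * w l' = - (w l' * w l)"
  shows "ordered_prod w T = (-1) ^ count_below T m * (w m * ordered_prod w (T - {m}))"
  using assms(1,2)
proof (induction T rule: finite_linorder_min_induct)
  case empty
  then show ?case by simp
next
  case (insert b A)
  show ?case
  proof (cases "m = b")
    case True
    have "A - {b} = A" using insert.hyps by auto
    then show ?thesis
      using insert True by (simp add: ordered_prod_insert_min count_below_insert_min)
  next
    case False
    then have m: "m \<in> A" using insert.prems by simp
    have "insert b A - {m} = insert b (A - {m})" using False by auto
    then have rest: "ordered_prod w (insert b A - {m}) = w b * ordered_prod w (A - {m})"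
      using insert by (simp add: ordered_prod_insert_min)
    have "ordered_prod w (insert b A) =
        (-1) ^ count_below A m * (w b * (w m * ordered_prod w (A - {m})))"
      using insert m by (simp add: ordered_prod_insert_min mult_neg1_power_left)
    also have "w b * (w m * ordered_prod w (A - {m})) = - (w m * ordered_prod w (insert b A - {m}))"
      using rest anticomm[of b m] by (simp flip: mult.assoc)
    finally show ?thesis
      using insert m by (simp add: count_below_insert_min)
  qed
qed

lemma ordered_prod_derivation:
  fixes w d :: "nat \<Rightarrow> 'a :: ring_1" and D :: "'a \<Rightarrow> 'a"
  assumes "finite T"
    and D_one: "D 1 = 0"
    and D_mult: "\<And>l x. D (w l * x) = d l * x - w l * D x"
    and commute: "\<And>l l'. w l' * d l = d l * w l'"
  shows "D (ordered_prod w T) = (\<Sum>m\<in>T. (-1) ^ count_below T m * (d m * ordered_prod w (T - {m})))"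
  using assms(1)
proof (induction T rule: finite_linorder_min_induct)
  case empty
  then show ?case by (simp add: D_one)
next
  case (insert b A)
  have b: "b \<notin> A" using insert by auto
  have "w b * ((-1) ^ count_below A m * (d m * ordered_prod w (A - {m}))) =
      - ((-1) ^ count_below (insert b A) m * (d m * ordered_prod w (insert b A - {m})))"
    if m: "m \<in> A" for m
  proof -
    have "insert b A - {m} = insert b (A - {m})" using m b by auto
    then have "ordered_prod w (insert b A - {m}) = w b * ordered_prod w (A - {m})"
      using insert by (simp add: ordered_prod_insert_min)
    moreover have "w b * (d m * ordered_prod w (A - {m})) = d m * (w b * ordered_prod w (A - {m}))"
      by (metis mult.assoc commute)
    ultimately show ?thesis
      using insert m by (simp add: count_below_insert_min mult_neg1_power_left)
  qed
  then have "w b * D (ordered_prod w A) =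
      - (\<Sum>m\<in>A. (-1) ^ count_below (insert b A) m * (d m * ordered_prod w (insert b A - {m})))"
    by (simp add: insert.IH sum_distrib_left sum_negf)
  then show ?case
    using insert b by (simp add: ordered_prod_insert_min D_mult count_below_insert_min)
qed

lemma ordered_prod_commute:
  fixes w :: "nat \<Rightarrow> 'a :: monoid_mult"
  assumes "\<And>l. c * w l = w l * c"
  shows "c * ordered_prod w T = ordered_prod w T * c"
  unfolding ordered_prod_def by (rule mult_prod_list_commute) (auto simp: assms)

lemma count_below_interval_diff:
  assumes "m \<in> {1..k}" "Q \<subseteq> {1..k}"
  shows "count_below ({1..k} - Q) m = (m - 1) - card (Q \<inter> {..<m})"
proof -
  have "{l \<in> {1..k} - Q. l < m} = {1..<m} - (Q \<inter> {..<m})" and "Q \<inter> {..<m} \<subseteq> {1..<m}"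
    using assms by auto
  then show ?thesis
    unfolding count_below_def by (simp add: card_Diff_subset finite_subset)
qed

section \<open>The exterior algebra\<close>

definition inversions :: "gen set \<Rightarrow> gen set \<Rightarrow> (gen \<times> gen) set" where
  "inversions S T = {(a, b). a \<in> S \<and> b \<in> T \<and> gcode b < gcode a}"

lemma esign_eq_inversions: "esign S T = (-1) ^ card (inversions S T)"
  by (simp add: esign_def inversions_def)

lemma finite_inversions: "finite S \<Longrightarrow> finite T \<Longrightarrow> finite (inversions S T)"
  unfolding inversions_def by (rule finite_subset[of _ "S \<times> T"]) auto

lemma esign_empty_left [simp]: "esign {} T = 1"
  by (simp add: esign_def)

lemma esign_empty_right [simp]: "esign S {} = 1"
  by (simp add: esign_def)

lemma esign_Un_left:
  assumes "finite S" "finite T" "finite R" "S \<inter> T = {}"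
  shows "esign (S \<union> T) R = esign S R * esign T R"
proof -
  have "inversions (S \<union> T) R = inversions S R \<union> inversions T R"
    and "inversions S R \<inter> inversions T R = {}"
    using assms(4) by (auto simp: inversions_def)
  then show ?thesis
    using assms by (simp add: esign_eq_inversions card_Un_disjoint finite_inversions power_add)
qed

lemma esign_Un_right:
  assumes "finite S" "finite T" "finite R" "T \<inter> R = {}"
  shows "esign S (T \<union> R) = esign S T * esign S R"
proof -
  have "inversions S (T \<union> R) = inversions S T \<union> inversions S R"
    and "inversions S T \<inter> inversions S R = {}"
    using assms(4) by (auto simp: inversions_def)
  then show ?thesis
    using assms by (simp add: esign_eq_inversions card_Un_disjoint finite_inversions power_add)
qed

lemma emult_finite: "finite U \<Longrightarrow> emult f g U = (\<Sum>S\<in>Pow U. f S * g (U - S) * esign S (U - S))"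
  by (simp add: emult_def)

lemma sum_Pow_Pow_swap:
  assumes "finite U"
  shows "(\<Sum>A\<in>Pow U. \<Sum>S\<in>Pow A. F A S) = (\<Sum>S\<in>Pow U. \<Sum>T\<in>Pow (U - S). F (S \<union> T) S)"
proof -
  have "(\<Sum>A\<in>Pow U. \<Sum>S\<in>Pow A. F A S) = (\<Sum>A\<in>Pow U. \<Sum>S\<in>{S\<in>Pow U. S \<subseteq> A}. F A S)"
    by (rule sum.cong) (auto intro!: sum.cong)
  also have "\<dots> = (\<Sum>S\<in>Pow U. \<Sum>A\<in>{A\<in>Pow U. S \<subseteq> A}. F A S)"
    using sum.swap_restrict[of "Pow U" "Pow U" F "\<lambda>A S. S \<subseteq> A"] assms by simp
  also have "\<dots> = (\<Sum>S\<in>Pow U. \<Sum>T\<in>Pow (U - S). F (S \<union> T) S)"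
  proof (rule sum.cong[OF refl])
    fix S assume "S \<in> Pow U"
    then have "bij_betw (\<lambda>T. S \<union> T) (Pow (U - S)) {A\<in>Pow U. S \<subseteq> A}"
      by (intro bij_betw_byWitness[where f'="\<lambda>A. A - S"]) auto
    from sum.reindex_bij_betw[OF this, of "\<lambda>A. F A S"]
    show "(\<Sum>A\<in>{A\<in>Pow U. S \<subseteq> A}. F A S) = (\<Sum>T\<in>Pow (U - S). F (S \<union> T) S)"
      by simp
  qed
  finally show ?thesis .
qed

lemma emult_emult_left_expand:
  assumes "finite U"
  shows "emult (emult f g) h U = (\<Sum>S\<in>Pow U. \<Sum>T\<in>Pow (U - S).
           f S * g T * h (U - S - T) * esign S T * esign (S \<union> T) (U - S - T))"
proof -
  have "emult (emult f g) h U =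
      (\<Sum>A\<in>Pow U. \<Sum>S\<in>Pow A. f S * g (A - S) * esign S (A - S) * h (U - A) * esign A (U - A))"
    using assms by (auto simp: emult_finite sum_distrib_right intro!: sum.cong
        dest: finite_subset[OF _ assms])
  also have "\<dots> = (\<Sum>S\<in>Pow U. \<Sum>T\<in>Pow (U - S).
      f S * g (S \<union> T - S) * esign S (S \<union> T - S) * h (U - (S \<union> T)) * esign (S \<union> T) (U - (S \<union> T)))"
    by (rule sum_Pow_Pow_swap[OF assms])
  also have "\<dots> = (\<Sum>S\<in>Pow U. \<Sum>T\<in>Pow (U - S).
      f S * g T * h (U - S - T) * esign S T * esign (S \<union> T) (U - S - T))"
  proof -
    have "S \<union> T - S = T" and "U - (S \<union> T) = U - S - T" if "T \<in> Pow (U - S)" for S T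
      using that by auto
    then show ?thesis by (intro sum.cong refl) simp
  qed
  finally show ?thesis .
qed

lemma emult_emult_right_expand:
  assumes "finite U"
  shows "emult f (emult g h) U = (\<Sum>S\<in>Pow U. \<Sum>T\<in>Pow (U - S).
           f S * g T * h (U - S - T) * esign T (U - S - T) * esign S (U - S))"
  using assms by (simp add: emult_finite sum_distrib_right sum_distrib_left mult_ac)

lemma emult_assoc: "emult (emult f g) h = emult f (emult g h)"
proof
  fix U
  show "emult (emult f g) h U = emult f (emult g h) U"
  proof (cases "finite U")
    case False
    then show ?thesis by (simp add: emult_def)
  next
    case fin: True
    have "esign S T * esign (S \<union> T) (U - S - T) = esign T (U - S - T) * esign S (U - S)"
      if "S \<subseteq> U" "T \<subseteq> U - S" for S T
    proof -
      have fin': "finite S" "finite T" "finite (U - S - T)"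
        using that fin by (auto intro: finite_subset)
      have "U - S = T \<union> (U - S - T)" using that by auto
      then have "esign S (U - S) = esign S T * esign S (U - S - T)"
        using esign_Un_right[OF fin'] by auto
      moreover have "esign (S \<union> T) (U - S - T) = esign S (U - S - T) * esign T (U - S - T)"
        using esign_Un_left[OF fin'] that by auto
      ultimately show ?thesis by simp
    qed
    then show ?thesis
      unfolding emult_emult_left_expand[OF fin] emult_emult_right_expand[OF fin]
      by (intro sum.cong refl) (auto simp: mult.assoc)
  qed
qed

\<comment> \<open>The second clause makes \<open>eone\<close> a unit: \<open>emult\<close> vanishes on infinite sets.\<close>
definition finite_coeffs :: "ext \<Rightarrow> bool" where
  "finite_coeffs f \<longleftrightarrow> finite {S. f S \<noteq> 0} \<and> (\<forall>S. f S \<noteq> 0 \<longrightarrow> finite S)"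

lemma emult_nonzero_split:
  "emult f g U \<noteq> 0 \<Longrightarrow> finite U \<and> (\<exists>S\<subseteq>U. f S \<noteq> 0 \<and> g (U - S) \<noteq> 0)"
  unfolding emult_def by (auto split: if_splits elim!: sum.not_neutral_contains_not_neutral)

lemma finite_coeffs_emult:
  assumes "finite_coeffs f" "finite_coeffs g"
  shows "finite_coeffs (emult f g)"
proof -
  have "{U. emult f g U \<noteq> 0} \<subseteq> (\<lambda>(S, T). S \<union> T) ` ({S. f S \<noteq> 0} \<times> {S. g S \<noteq> 0})"
  proof
    fix U assume "U \<in> {U. emult f g U \<noteq> 0}"
    then obtain S where "S \<subseteq> U" "f S \<noteq> 0" "g (U - S) \<noteq> 0"
      using emult_nonzero_split by blast
    then show "U \<in> (\<lambda>(S, T). S \<union> T) ` ({S. f S \<noteq> 0} \<times> {S. g S \<noteq> 0})"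
      by (auto intro!: image_eqI[where x="(S, U - S)"])
  qed
  moreover have "finite ((\<lambda>(S, T). S \<union> T) ` ({S. f S \<noteq> 0} \<times> {S. g S \<noteq> 0}))"
    using assms by (auto simp: finite_coeffs_def)
  ultimately show ?thesis
    using emult_nonzero_split unfolding finite_coeffs_def by (auto intro: finite_subset)
qed

lemma finite_coeffs_pointwise:
  assumes "finite_coeffs f" "finite_coeffs g" "\<And>S. h S \<noteq> 0 \<Longrightarrow> f S \<noteq> 0 \<or> g S \<noteq> 0"
  shows "finite_coeffs h"
proof -
  have "{S. h S \<noteq> 0} \<subseteq> {S. f S \<noteq> 0} \<union> {S. g S \<noteq> 0}" using assms(3) by blast
  then show ?thesis
    using assms unfolding finite_coeffs_def by (meson finite_Un finite_subset)
qed

lemma finite_coeffs_eadd: "finite_coeffs f \<Longrightarrow> finite_coeffs g \<Longrightarrow> finite_coeffs (eadd f g)"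
  by (erule finite_coeffs_pointwise) (auto simp: eadd_def)

lemma finite_coeffs_esub: "finite_coeffs f \<Longrightarrow> finite_coeffs g \<Longrightarrow> finite_coeffs (esub f g)"
  by (erule finite_coeffs_pointwise) (auto simp: esub_def)

lemma finite_coeffs_esc: "finite_coeffs f \<Longrightarrow> finite_coeffs (esc r f)"
  unfolding finite_coeffs_def esc_def by (auto intro: finite_subset[of _ "{S. f S \<noteq> 0}"])

lemma finite_coeffs_esum:
  "finite A \<Longrightarrow> (\<And>a. a \<in> A \<Longrightarrow> finite_coeffs (F a)) \<Longrightarrow> finite_coeffs (esum F A)"
proof (induction A rule: finite_induct)
  case empty
  then show ?case by (simp add: esum_def finite_coeffs_def)
next
  case (insert a A)
  then have "esum F (insert a A) = eadd (F a) (esum F A)"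
    by (auto simp: esum_def eadd_def)
  then show ?case using insert finite_coeffs_eadd by auto
qed

lemma finite_coeffs_mon: "finite S \<Longrightarrow> finite_coeffs (mon S)"
  by (simp add: finite_coeffs_def mon_def)

lemma emult_eone_left: "finite_coeffs f \<Longrightarrow> emult eone f = f"
proof
  fix U assume f: "finite_coeffs f"
  show "emult eone f U = f U"
  proof (cases "finite U")
    case True
    have "(\<Sum>S\<in>Pow U. eone S * f (U - S) * esign S (U - S)) = (\<Sum>S\<in>{{}}. eone S * f (U - S) * esign S (U - S))"
      by (rule sum.mono_neutral_right) (auto simp: eone_def True)
    then show ?thesis using True by (simp add: emult_def eone_def)
  next
    case False
    then show ?thesis using f by (auto simp: emult_def finite_coeffs_def)
  qed
qed

lemma emult_eone_right: "finite_coeffs f \<Longrightarrow> emult f eone = f"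
proof
  fix U assume f: "finite_coeffs f"
  show "emult f eone U = f U"
  proof (cases "finite U")
    case True
    have "(\<Sum>S\<in>Pow U. f S * eone (U - S) * esign S (U - S)) = (\<Sum>S\<in>{U}. f S * eone (U - S) * esign S (U - S))"
      by (rule sum.mono_neutral_right) (auto simp: eone_def True)
    then show ?thesis using True by (simp add: emult_def eone_def)
  next
    case False
    then show ?thesis using f by (auto simp: emult_def finite_coeffs_def)
  qed
qed

lemma emult_ezero_right: "emult f ezero = ezero"
  by (auto simp: emult_def ezero_def)

lemma emult_eadd_left: "emult (eadd f g) h = eadd (emult f h) (emult g h)"
  by (auto simp: emult_def eadd_def algebra_simps sum.distrib)

lemma emult_eadd_right: "emult h (eadd f g) = eadd (emult h f) (emult h g)"
  by (auto simp: emult_def eadd_def algebra_simps sum.distrib)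

typedef exterior = "{f :: ext. finite_coeffs f}"
  morphisms coeff Abs_exterior
  by (rule exI[of _ ezero]) (simp add: ezero_def finite_coeffs_def)

setup_lifting type_definition_exterior

instantiation exterior :: ring_1
begin

lift_definition zero_exterior :: exterior is ezero
  by (simp add: finite_coeffs_def ezero_def)

lift_definition one_exterior :: exterior is eone
  by (simp add: finite_coeffs_def eone_def)

lift_definition plus_exterior :: "exterior \<Rightarrow> exterior \<Rightarrow> exterior" is eadd
  by (rule finite_coeffs_eadd)

lift_definition minus_exterior :: "exterior \<Rightarrow> exterior \<Rightarrow> exterior" is esub
  by (rule finite_coeffs_esub)

lift_definition uminus_exterior :: "exterior \<Rightarrow> exterior" is "\<lambda>f S. - f S"
  by (simp add: finite_coeffs_def)

lift_definition times_exterior :: "exterior \<Rightarrow> exterior \<Rightarrow> exterior" is emult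
  by (rule finite_coeffs_emult)

instance
proof
  fix a b c :: exterior
  show "a * b * c = a * (b * c)" by transfer (rule emult_assoc)
  show "a + b + c = a + (b + c)" by transfer (simp add: eadd_def add.assoc)
  show "a + b = b + a" by transfer (simp add: eadd_def add.commute)
  show "0 + a = a" by transfer (simp add: eadd_def ezero_def)
  show "- a + a = 0" by transfer (simp add: eadd_def ezero_def)
  show "a - b = a + - b" by transfer (simp add: eadd_def esub_def)
  show "(a + b) * c = a * c + b * c" by transfer (rule emult_eadd_left)
  show "a * (b + c) = a * b + a * c" by transfer (rule emult_eadd_right)
  show "1 * a = a" by transfer (rule emult_eone_left)
  show "a * 1 = a" by transfer (rule emult_eone_right)
  show "(0::exterior) \<noteq> 1"
  proof transfer
    have "ezero {} \<noteq> eone {}" by (simp add: ezero_def eone_def)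
    then show "ezero \<noteq> eone" by metis
  qed
qed

end

lemmas coeff_simps = zero_exterior.rep_eq one_exterior.rep_eq plus_exterior.rep_eq
  minus_exterior.rep_eq uminus_exterior.rep_eq times_exterior.rep_eq

lemma exterior_eqI: "coeff x = coeff y \<Longrightarrow> x = y"
  by (simp add: coeff_inject)

lemma finite_coeffs_coeff: "finite_coeffs (coeff x)"
  using coeff by simp

lemma finite_coeff_support: "finite {S. coeff x S \<noteq> 0}"
  using finite_coeffs_coeff[of x] by (simp add: finite_coeffs_def)

lemma coeff_Abs_exterior: "finite_coeffs f \<Longrightarrow> coeff (Abs_exterior f) = f"
  by (simp add: Abs_exterior_inverse)

lemma coeff_sum: "coeff (sum F A) = esum (\<lambda>a. coeff (F a)) A"
  by (induction A rule: infinite_finite_induct)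
    (auto simp: esum_def coeff_simps ezero_def eadd_def)

lift_definition qscale :: "rat \<Rightarrow> exterior \<Rightarrow> exterior" is esc
  by (rule finite_coeffs_esc)

lemma qscale_mult_right: "qscale r (x * y) = x * qscale r y"
  by transfer (auto simp: esc_def emult_def sum_distrib_left mult_ac)

lemma qscale_diff: "qscale r (x - y) = qscale r x - qscale r y"
  by transfer (auto simp: esc_def esub_def algebra_simps)

lemma qscale_minus_one: "qscale (-1) x = - x"
  by transfer (auto simp: esc_def)

lemma qscale_neg1_power: "qscale ((-1) ^ k) x = (-1) ^ k * x"
proof (induction k)
  case 0
  have "qscale 1 x = x" by transfer (simp add: esc_def)
  then show ?case by simp
next
  case (Suc k)
  have "qscale ((-1) ^ Suc k) x = qscale (-1) (qscale ((-1) ^ k) x)"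
    by transfer (simp add: esc_def)
  then show ?case using Suc by (simp add: qscale_minus_one)
qed

lemma coeff_neg1_power_mult: "coeff ((-1) ^ k * x) = esc ((-1) ^ k) (coeff x)"
  by (simp flip: qscale_neg1_power add: qscale.rep_eq)

definition monomial :: "gen set \<Rightarrow> exterior" where
  "monomial S = Abs_exterior (mon S)"

lemma coeff_monomial: "finite S \<Longrightarrow> coeff (monomial S) = mon S"
  by (simp add: monomial_def coeff_Abs_exterior finite_coeffs_mon)

lemma monomial_empty: "monomial {} = 1"
  by (rule exterior_eqI) (simp add: coeff_monomial coeff_simps mon_def eone_def)

lemma emult_mon:
  assumes "finite S" "finite T"
  shows "emult (mon S) (mon T) = (if S \<inter> T = {} then esc (esign S T) (mon (S \<union> T)) else ezero)"
proof
  fix U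
  show "emult (mon S) (mon T) U = (if S \<inter> T = {} then esc (esign S T) (mon (S \<union> T)) else ezero) U"
  proof (cases "finite U")
    case False
    then have "U \<noteq> S \<union> T" using assms by auto
    then show ?thesis using False by (simp add: emult_def esc_def mon_def ezero_def)
  next
    case True
    have "emult (mon S) (mon T) U
        = (\<Sum>S'\<in>(if S \<subseteq> U \<and> U - S = T then {S} else {}). mon S S' * mon T (U - S') * esign S' (U - S'))"
      unfolding emult_finite[OF True] by (rule sum.mono_neutral_right) (auto simp: True mon_def)
    then show ?thesis
      by (cases "S \<subseteq> U \<and> U - S = T") (auto simp: esc_def mon_def ezero_def)
  qed
qed

lemma monomial_mult:
  assumes "finite S" "finite T"
  shows "monomial S * monomial T =
    (if S \<inter> T = {} then (-1) ^ card (inversions S T) * monomial (S \<union> T) else 0)"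
proof (cases "S \<inter> T = {}")
  case True
  have "coeff (monomial S * monomial T) = esc (esign S T) (mon (S \<union> T))"
    using assms True by (simp add: coeff_simps coeff_monomial emult_mon)
  then show ?thesis
    using assms True
    by (intro exterior_eqI) (simp add: coeff_neg1_power_mult coeff_monomial esign_eq_inversions)
next
  case False
  then show ?thesis
    using assms by (intro exterior_eqI) (simp add: coeff_monomial coeff_simps emult_mon)
qed

lemma gcode_mod_3: "gcode g mod 3 = (case g of X _ \<Rightarrow> 0 | Y _ \<Rightarrow> 1 | W _ _ \<Rightarrow> 2)"
  by (cases g) (simp_all, presburger)

lemma inj_gcode: "inj gcode"
proof
  fix g h :: gen
  assume eq: "gcode g = gcode h"
  then have "gcode g mod 3 = gcode h mod 3" by simp
  then have "(case g of X _ \<Rightarrow> 0 | Y _ \<Rightarrow> 1 | W _ _ \<Rightarrow> 2) =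
      (case h of X _ \<Rightarrow> 0 | Y _ \<Rightarrow> 1 | W _ _ \<Rightarrow> (2::nat))"
    by (simp only: gcode_mod_3)
  then show "g = h"
    using eq by (cases g; cases h) simp_all
qed

definition generator :: "gen \<Rightarrow> exterior" where
  "generator g = monomial {g}"

lemma coeff_generator: "coeff (generator g) = mon {g}"
  by (simp add: generator_def coeff_monomial)

lemma generator_square: "generator g * generator g = 0"
  by (simp add: generator_def monomial_mult)

lemma generator_anticommute: "generator g * generator h = - (generator h * generator g)"
proof (cases "g = h")
  case True
  then show ?thesis by (simp add: generator_square)
next
  case False
  then have "gcode g \<noteq> gcode h" using inj_gcode by (auto dest: injD)
  then have "inversions {g} {h} = {} \<and> inversions {h} {g} = {(h, g)} \<or>
      inversions {g} {h} = {(g, h)} \<and> inversions {h} {g} = {}"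
    by (cases "gcode g < gcode h") (auto simp: inversions_def)
  moreover have "generator g * generator h = (-1) ^ card (inversions {g} {h}) * monomial {g, h}"
    and "generator h * generator g = (-1) ^ card (inversions {h} {g}) * monomial {g, h}"
    using False unfolding generator_def
    by (simp_all add: monomial_mult) (metis insert_is_Un sup_commute)
  ultimately show ?thesis by auto
qed

inductive_set gen_span :: "exterior set" where
  generator: "generator g \<in> gen_span"
| zero: "0 \<in> gen_span"
| add: "x \<in> gen_span \<Longrightarrow> y \<in> gen_span \<Longrightarrow> x + y \<in> gen_span"
| uminus: "x \<in> gen_span \<Longrightarrow> - x \<in> gen_span"

lemma gen_span_diff: "x \<in> gen_span \<Longrightarrow> y \<in> gen_span \<Longrightarrow> x - y \<in> gen_span"
  unfolding diff_conv_add_uminus by (intro gen_span.add gen_span.uminus)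

lemma gen_span_anticommute_generator: "x \<in> gen_span \<Longrightarrow> x * generator h = - (generator h * x)"
proof (induction rule: gen_span.induct)
  case (generator g)
  show ?case by (rule generator_anticommute)
next
  case (add x y)
  then show ?case by (simp add: distrib_left distrib_right)
qed simp_all

lemma gen_span_anticommute:
  assumes "x \<in> gen_span" and "y \<in> gen_span"
  shows "x * y = - (y * x)"
  using assms(2)
proof (induction rule: gen_span.induct)
  case (generator g)
  show ?case using assms(1) by (rule gen_span_anticommute_generator)
next
  case (add y z)
  then show ?case by (simp add: distrib_left distrib_right)
qed simp_all

lemma gen_span_square: "x \<in> gen_span \<Longrightarrow> x * x = 0"
proof (induction rule: gen_span.induct)
  case (generator g)
  then show ?case by (rule generator_square)
next
  case (add x y)
  then show ?case
    using gen_span_anticommute[OF add.hyps] by (simp add: algebra_simps)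
qed simp_all

section \<open>The differential\<close>

definition D2_gen :: "gen \<Rightarrow> exterior" where
  "D2_gen g = Abs_exterior (dgen g)"

lemma coeff_D2_gen: "coeff (D2_gen g) = dgen g"
proof -
  have "finite_coeffs (dgen g)"
  proof (cases g)
    case (W i j)
    then show ?thesis
      by (simp add: xg_def yg_def finite_coeffs_emult finite_coeffs_esub finite_coeffs_mon)
  qed (simp_all add: ezero_def finite_coeffs_def)
  then show ?thesis by (simp add: D2_gen_def coeff_Abs_exterior)
qed

lemma D2_gen_W:
  "D2_gen (W i j) = (generator (X i) - generator (X j)) * (generator (Y i) - generator (Y j))"
  by (rule exterior_eqI) (simp add: coeff_D2_gen coeff_simps coeff_generator xg_def yg_def)

lemma D2_gen_X: "D2_gen (X i) = 0"
  by (rule exterior_eqI) (simp add: coeff_D2_gen coeff_simps)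

lemma D2_gen_Y: "D2_gen (Y i) = 0"
  by (rule exterior_eqI) (simp add: coeff_D2_gen coeff_simps)

lemma D2_gen_commute: "D2_gen g * generator h = generator h * D2_gen g"
proof (cases g)
  case (W i j)
  show ?thesis
    unfolding W D2_gen_W
    by (intro mult_commute_of_anticommute gen_span_anticommute_generator gen_span_diff
        gen_span.generator)
qed (simp_all add: D2_gen_X D2_gen_Y)

definition D2 :: "exterior \<Rightarrow> exterior" where
  "D2 x = Abs_exterior (d2 (coeff x))"

lemma finite_coeffs_d2: "finite_coeffs f \<Longrightarrow> finite_coeffs (d2 f)"
  unfolding d2_def dmon_def finite_coeffs_def[of f]
  by (intro finite_coeffs_esum finite_coeffs_esc finite_coeffs_emult finite_coeffs_mon)
    (auto simp: coeff_D2_gen[symmetric] finite_coeffs_coeff)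

lemma coeff_D2: "coeff (D2 x) = d2 (coeff x)"
  by (simp add: D2_def coeff_Abs_exterior finite_coeffs_d2 finite_coeffs_coeff)

lemma d2_eq_sum_superset:
  assumes "finite A" "{S. f S \<noteq> 0} \<subseteq> A"
  shows "d2 f = esum (\<lambda>S. esc (f S) (dmon S)) A"
  unfolding d2_def esum_def
  by (intro ext sum.mono_neutral_left) (use assms in \<open>auto simp: esc_def\<close>)

lemma D2_add: "D2 (x + y) = D2 x + D2 y"
proof (rule exterior_eqI)
  let ?A = "{S. coeff x S \<noteq> 0} \<union> {S. coeff y S \<noteq> 0}"
  have fin: "finite ?A" by (simp add: finite_coeff_support)
  have "coeff (D2 (x + y)) = esum (\<lambda>S. esc (coeff (x + y) S) (dmon S)) ?A"
    unfolding coeff_D2 by (rule d2_eq_sum_superset[OF fin]) (auto simp: coeff_simps eadd_def)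
  also have "\<dots> = eadd (esum (\<lambda>S. esc (coeff x S) (dmon S)) ?A) (esum (\<lambda>S. esc (coeff y S) (dmon S)) ?A)"
    by (auto simp: esum_def eadd_def esc_def coeff_simps algebra_simps sum.distrib)
  also have "\<dots> = coeff (D2 x + D2 y)"
    unfolding coeff_simps coeff_D2 by (subst (1 2) d2_eq_sum_superset[OF fin]) auto
  finally show "coeff (D2 (x + y)) = coeff (D2 x + D2 y)" .
qed

lemma D2_qscale: "D2 (qscale r x) = qscale r (D2 x)"
proof (rule exterior_eqI)
  let ?A = "{S. coeff x S \<noteq> 0}"
  have fin: "finite ?A" by (rule finite_coeff_support)
  have "coeff (D2 (qscale r x)) = esum (\<lambda>S. esc (coeff (qscale r x) S) (dmon S)) ?A"
    unfolding coeff_D2 by (rule d2_eq_sum_superset[OF fin]) (auto simp: qscale.rep_eq esc_def)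
  also have "\<dots> = esc r (esum (\<lambda>S. esc (coeff x S) (dmon S)) ?A)"
    by (auto simp: esum_def esc_def qscale.rep_eq sum_distrib_left mult_ac)
  also have "\<dots> = coeff (qscale r (D2 x))"
    unfolding qscale.rep_eq coeff_D2 by (subst d2_eq_sum_superset[OF fin]) auto
  finally show "coeff (D2 (qscale r x)) = coeff (qscale r (D2 x))" .
qed

lemma D2_zero: "D2 0 = 0"
  by (rule exterior_eqI) (simp add: coeff_D2 coeff_simps d2_def ezero_def esum_def)

lemma D2_uminus: "D2 (- x) = - D2 x"
  using D2_qscale[of "-1" x] by (simp add: qscale_minus_one)

lemma D2_diff: "D2 (x - y) = D2 x - D2 y"
  using D2_add[of x "- y"] by (simp add: D2_uminus)

lemma D2_sum: "D2 (sum F A) = (\<Sum>a\<in>A. D2 (F a))"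
  by (induction A rule: infinite_finite_induct) (auto simp: D2_zero D2_add)

lemma D2_neg1_power_mult: "D2 ((-1) ^ k * x) = (-1) ^ k * D2 x"
  by (metis D2_qscale qscale_neg1_power)

definition gen_rank :: "gen set \<Rightarrow> gen \<Rightarrow> nat" where
  "gen_rank S g = card {h \<in> S. gcode h < gcode g}"

lemma D2_monomial:
  assumes "finite S"
  shows "D2 (monomial S) = (\<Sum>g\<in>S. (-1) ^ gen_rank S g * (D2_gen g * monomial (S - {g})))"
proof (rule exterior_eqI)
  have "coeff (D2 (monomial S)) = esum (\<lambda>T. esc (mon S T) (dmon T)) {S}"
    unfolding coeff_D2 coeff_monomial[OF assms]
    by (rule d2_eq_sum_superset) (auto simp: mon_def)
  also have "\<dots> = dmon S"
    by (auto simp: esum_def esc_def mon_def)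
  finally show "coeff (D2 (monomial S)) =
      coeff (\<Sum>g\<in>S. (-1) ^ gen_rank S g * (D2_gen g * monomial (S - {g})))"
    using assms by (simp add: dmon_def coeff_sum coeff_neg1_power_mult gen_rank_def)
      (simp add: coeff_simps coeff_D2_gen coeff_monomial)
qed

lemma D2_one: "D2 1 = 0"
  using D2_monomial[of "{}"] by (simp add: monomial_empty)

lemma monomial_expansion: "x = (\<Sum>S | coeff x S \<noteq> 0. qscale (coeff x S) (monomial S))"
proof (rule exterior_eqI, rule ext)
  fix U
  have fin: "\<And>S. coeff x S \<noteq> 0 \<Longrightarrow> finite S"
    using finite_coeffs_coeff[of x] by (auto simp: finite_coeffs_def)
  have "coeff (\<Sum>S | coeff x S \<noteq> 0. qscale (coeff x S) (monomial S)) U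
      = (\<Sum>S | coeff x S \<noteq> 0. coeff x S * mon S U)"
    by (auto simp: coeff_sum esum_def qscale.rep_eq esc_def coeff_monomial fin intro!: sum.cong)
  also have "\<dots> = (\<Sum>S\<in>{S. coeff x S \<noteq> 0} \<inter> {U}. coeff x S * mon S U)"
    by (rule sum.mono_neutral_right) (auto simp: finite_coeff_support mon_def)
  also have "\<dots> = coeff x U"
    by (cases "coeff x U = 0") (auto simp: mon_def)
  finally show "coeff x U = coeff (\<Sum>S | coeff x S \<noteq> 0. qscale (coeff x S) (monomial S)) U"
    by simp
qed

lemma card_inversions_singleton: "card (inversions {g} S) = gen_rank S g"
proof -
  have "inversions {g} S = Pair g ` {h \<in> S. gcode h < gcode g}"
    by (auto simp: inversions_def)
  then show ?thesis by (simp add: card_image inj_on_def gen_rank_def)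
qed

lemma generator_mult_monomial:
  "finite S \<Longrightarrow> generator g * monomial S =
    (if g \<in> S then 0 else (-1) ^ gen_rank S g * monomial (insert g S))"
  unfolding generator_def by (subst monomial_mult) (auto simp: card_inversions_singleton)

lemma gen_rank_insert:
  assumes "finite S" "g \<notin> S"
  shows "gen_rank (insert g S) h = gen_rank S h + (if gcode g < gcode h then 1 else 0)"
proof -
  have "{h' \<in> insert g S. gcode h' < gcode h} =
      (if gcode g < gcode h then insert g {h' \<in> S. gcode h' < gcode h} else {h' \<in> S. gcode h' < gcode h})"
    by auto
  then show ?thesis using assms by (simp add: gen_rank_def)
qed

lemma gen_rank_insert_self: "gen_rank (insert g S) g = gen_rank S g"
  unfolding gen_rank_def by (rule arg_cong[where f=card]) auto

lemma gen_rank_remove: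
  "finite S \<Longrightarrow> h \<in> S \<Longrightarrow> gen_rank S g = gen_rank (S - {h}) g + (if gcode h < gcode g then 1 else 0)"
  using gen_rank_insert[of "S - {h}" h g] by (simp add: insert_absorb)

lemma generator_mult_D2_monomial:
  assumes "finite S"
  shows "generator g * D2 (monomial S) =
    (\<Sum>h\<in>S. (-1) ^ gen_rank S h * (D2_gen h * (generator g * monomial (S - {h}))))"
  unfolding D2_monomial[OF assms] sum_distrib_left
proof (rule sum.cong[OF refl])
  fix h
  have "generator g * (D2_gen h * Z) = D2_gen h * (generator g * Z)" for Z
    by (metis mult.assoc D2_gen_commute)
  then show "generator g * ((-1) ^ gen_rank S h * (D2_gen h * monomial (S - {h}))) =
      (-1) ^ gen_rank S h * (D2_gen h * (generator g * monomial (S - {h})))"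
    by (simp add: mult_neg1_power_left)
qed

lemma D2_generator_mult_monomial_mem:
  assumes "finite S" "g \<in> S"
  shows "D2 (generator g * monomial S) = D2_gen g * monomial S - generator g * D2 (monomial S)"
proof -
  have "generator g * D2 (monomial S) =
      (-1) ^ gen_rank S g * (D2_gen g * (generator g * monomial (S - {g}))) +
      (\<Sum>h\<in>S - {g}. (-1) ^ gen_rank S h * (D2_gen h * (generator g * monomial (S - {h}))))"
    unfolding generator_mult_D2_monomial[OF assms(1)] using assms by (rule sum.remove)
  also have "(\<Sum>h\<in>S - {g}. (-1) ^ gen_rank S h * (D2_gen h * (generator g * monomial (S - {h})))) = 0"
    using assms by (intro sum.neutral) (auto simp: generator_mult_monomial)
  also have "generator g * monomial (S - {g}) = (-1) ^ gen_rank S g * monomial S"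
  proof -
    have "gen_rank (S - {g}) g = gen_rank S g" using gen_rank_remove[OF assms, of g] by simp
    moreover have "insert g (S - {g}) = S" using assms(2) by auto
    ultimately show ?thesis using assms(1) by (simp add: generator_mult_monomial)
  qed
  finally have "generator g * D2 (monomial S) = D2_gen g * monomial S"
    by (simp only: add_0_right mult_neg1_power_left[of "D2_gen g"] neg1_power_mult_self)
  then show ?thesis
    using assms by (simp add: generator_mult_monomial D2_zero)
qed

lemma D2_generator_mult_monomial_not_mem:
  assumes fin: "finite S" and g: "g \<notin> S"
  shows "D2 (generator g * monomial S) = D2_gen g * monomial S - generator g * D2 (monomial S)"
proof -
  let ?c = "gen_rank S g"
  have summand: "(-1) ^ ?c * ((-1) ^ gen_rank (insert g S) h * (D2_gen h * monomial (insert g S - {h})))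
      = - ((-1) ^ gen_rank S h * (D2_gen h * (generator g * monomial (S - {h}))))"
    if h: "h \<in> S" for h
  proof -
    let ?r = "gen_rank (insert g S) h"
    let ?b = "gen_rank (S - {h}) g"
    have "gcode g \<noteq> gcode h" using g h inj_gcode by (auto dest: injD)
    \<comment> \<open>the two reorderings contribute [gcode h < gcode g] + [gcode g < gcode h] = 1\<close>
    then have exp: "?c + ?r + ?b = Suc (gen_rank S h + 2 * ?b)"
      using gen_rank_remove[OF fin h, of g] gen_rank_insert[OF fin g, of h] by auto
    have "insert g S - {h} = insert g (S - {h})" using g h by auto
    then have mon: "monomial (insert g S - {h}) = (-1) ^ ?b * (generator g * monomial (S - {h}))"
      using fin g by (simp add: generator_mult_monomial neg1_power_mult_self)
    have "(-1) ^ ?c * ((-1) ^ ?r * (D2_gen h * monomial (insert g S - {h})))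
        = (-1) ^ (?c + ?r) * (D2_gen h * ((-1) ^ ?b * (generator g * monomial (S - {h}))))"
      by (simp only: mon power_add mult.assoc)
    also have "\<dots> = (-1) ^ (?c + ?r + ?b) * (D2_gen h * (generator g * monomial (S - {h})))"
      by (simp only: mult_neg1_power_left[of "D2_gen h"] power_add mult.assoc)
    finally show ?thesis
      by (simp add: exp power_add power_mult)
  qed
  have "D2 (generator g * monomial S) = (-1) ^ ?c * D2 (monomial (insert g S))"
    using fin g by (simp add: generator_mult_monomial D2_neg1_power_mult)
  also have "\<dots> = (-1) ^ ?c * ((-1) ^ ?c * (D2_gen g * monomial S)) +
      (\<Sum>h\<in>S. (-1) ^ ?c * ((-1) ^ gen_rank (insert g S) h * (D2_gen h * monomial (insert g S - {h}))))"
    using fin g by (simp add: D2_monomial gen_rank_insert_self distrib_left sum_distrib_left)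
  also have "\<dots> = D2_gen g * monomial S - generator g * D2 (monomial S)"
    using fin by (simp add: summand neg1_power_mult_self generator_mult_D2_monomial sum_negf)
  finally show ?thesis .
qed

lemma D2_generator_mult_monomial:
  "finite S \<Longrightarrow> D2 (generator g * monomial S) = D2_gen g * monomial S - generator g * D2 (monomial S)"
  using D2_generator_mult_monomial_mem D2_generator_mult_monomial_not_mem by blast

lemma D2_generator_mult: "D2 (generator g * x) = D2_gen g * x - generator g * D2 x"
proof -
  let ?A = "{S. coeff x S \<noteq> 0}"
  have fin: "\<And>S. S \<in> ?A \<Longrightarrow> finite S"
    using finite_coeffs_coeff[of x] by (auto simp: finite_coeffs_def)
  have "D2 (generator g * x) = (\<Sum>S\<in>?A. qscale (coeff x S) (D2 (generator g * monomial S)))"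
    by (subst monomial_expansion) (simp add: sum_distrib_left D2_sum D2_qscale flip: qscale_mult_right)
  also have "\<dots> = (\<Sum>S\<in>?A. qscale (coeff x S) (D2_gen g * monomial S) -
      qscale (coeff x S) (generator g * D2 (monomial S)))"
    by (rule sum.cong) (simp_all add: D2_generator_mult_monomial fin qscale_diff)
  also have "\<dots> = D2_gen g * x - generator g * D2 x"
    by (subst (1 3) monomial_expansion)
      (simp add: sum_distrib_left D2_sum D2_qscale sum_subtractf flip: qscale_mult_right)
  finally show ?thesis .
qed

lemma D2_alternating_sum:
  fixes v w d :: "nat \<Rightarrow> exterior"
  assumes "finite K"
    and D2_w: "\<And>l x. D2 (w l * x) = d l * x - w l * D2 x"
    and commute: "\<And>l l'. w l' * d l = d l * w l'"
    and D2_v: "\<And>i x. D2 (v i * x) = - (v i * D2 x)"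
  shows "D2 (\<Sum>(i, j)\<in>P. (-1) ^ (i + j) * (v i * ordered_prod w (K - {i, j}))) =
    (\<Sum>(i, j)\<in>P. \<Sum>m\<in>K - {i, j}.
       - ((-1) ^ (i + j + count_below (K - {i, j}) m) * (v i * (d m * ordered_prod w (K - {i, j} - {m})))))"
  unfolding D2_sum
proof (rule sum.cong[OF refl], clarify)
  fix i j
  have "v i * D2 (ordered_prod w (K - {i, j})) =
      (\<Sum>m\<in>K - {i, j}. (-1) ^ count_below (K - {i, j}) m * (v i * (d m * ordered_prod w (K - {i, j} - {m}))))"
    unfolding ordered_prod_derivation[OF finite_Diff[OF assms(1)] D2_one D2_w commute]
      sum_distrib_left
    by (simp add: mult_neg1_power_left)
  then show "D2 ((-1) ^ (i + j) * (v i * ordered_prod w (K - {i, j}))) =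
      (\<Sum>m\<in>K - {i, j}. - ((-1) ^ (i + j + count_below (K - {i, j}) m) *
         (v i * (d m * ordered_prod w (K - {i, j} - {m})))))"
    by (simp add: D2_neg1_power_mult D2_v sum_distrib_left power_add mult.assoc sum_negf)
qed

section \<open>The ideal of relations\<close>

definition supported :: "nat \<Rightarrow> exterior \<Rightarrow> bool" where
  "supported n x \<longleftrightarrow> (\<forall>S. coeff x S \<noteq> 0 \<longrightarrow> S \<subseteq> gens n)"

lemma finsupp_coeff_iff: "finsupp n (coeff x) \<longleftrightarrow> supported n x"
  using finite_coeffs_coeff[of x] by (auto simp: finsupp_def supported_def finite_coeffs_def)

lemma supported_one: "supported n 1"
  by (simp add: supported_def coeff_simps eone_def)

lemma supported_add: "supported n x \<Longrightarrow> supported n y \<Longrightarrow> supported n (x + y)"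
  unfolding supported_def coeff_simps eadd_def by (metis add.right_neutral add_0)

lemma supported_uminus: "supported n x \<Longrightarrow> supported n (- x)"
  unfolding supported_def coeff_simps by simp

lemma supported_diff: "supported n x \<Longrightarrow> supported n y \<Longrightarrow> supported n (x - y)"
  unfolding diff_conv_add_uminus by (intro supported_add supported_uminus)

lemma supported_mult:
  assumes x: "supported n x" and y: "supported n y"
  shows "supported n (x * y)"
  unfolding supported_def
proof (intro allI impI)
  fix U assume "coeff (x * y) U \<noteq> 0"
  then have "emult (coeff x) (coeff y) U \<noteq> 0" by (simp add: coeff_simps)
  then obtain S where "S \<subseteq> U" "coeff x S \<noteq> 0" "coeff y (U - S) \<noteq> 0"
    using emult_nonzero_split by blast
  moreover have "U = S \<union> (U - S)" using \<open>S \<subseteq> U\<close> by blast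
  ultimately show "U \<subseteq> gens n" using x y unfolding supported_def by blast
qed

lemma supported_neg1_power: "supported n ((-1) ^ k)"
  by (induction k) (simp_all add: supported_one supported_mult supported_uminus)

lemma supported_prod_list: "(\<And>z. z \<in> set zs \<Longrightarrow> supported n z) \<Longrightarrow> supported n (prod_list zs)"
  by (induction zs) (auto simp: supported_one supported_mult)

lemma supported_generator: "g \<in> gens n \<Longrightarrow> supported n (generator g)"
  by (auto simp: supported_def coeff_generator mon_def)

definition E2_ideal :: "nat \<Rightarrow> exterior set" where
  "E2_ideal n = {x. coeff x \<in> rel_ideal n}"

lemma rel_ideal_uminus: "p \<in> rel_ideal n \<Longrightarrow> (\<lambda>S. - p S) \<in> rel_ideal n"
proof (induction rule: rel_ideal.induct)
  case zero
  have "(\<lambda>S. - ezero S) = ezero" by (simp add: ezero_def)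
  then show ?case using rel_ideal.zero by simp
next
  case (gen a r)
  have "(\<lambda>S. - emult a r S) = emult (\<lambda>S. - a S) r"
    by (auto simp: emult_def sum_negf)
  moreover have "finsupp n (\<lambda>S. - a S)" using gen(1) by (simp add: finsupp_def)
  ultimately show ?case using rel_ideal.gen gen(2) by simp
next
  case (add p q)
  have "(\<lambda>S. - eadd p q S) = eadd (\<lambda>S. - p S) (\<lambda>S. - q S)" by (simp add: eadd_def)
  then show ?case using rel_ideal.add add by simp
qed

lemma finite_gens: "finite (gens n)"
proof -
  have "gens n \<subseteq> X ` {1..n} \<union> Y ` {1..n} \<union> (\<lambda>(i, j). W i j) ` ({1..n} \<times> {1..n})"
    by (auto simp: gens_def)
  then show ?thesis by (rule finite_subset) auto
qed

lemma rel_ideal_mult_left: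
  assumes "p \<in> rel_ideal n" "supported n b"
  shows "emult (coeff b) p \<in> rel_ideal n"
  using assms
proof (induction rule: rel_ideal.induct)
  case zero
  then show ?case by (simp add: emult_ezero_right rel_ideal.zero)
next
  case (gen a r)
  have "finite_coeffs a"
    using gen(1) finite_gens unfolding finsupp_def finite_coeffs_def by (auto intro: finite_subset)
  then have "supported n (b * Abs_exterior a)"
    using gen by (intro supported_mult) (simp_all add: coeff_Abs_exterior flip: finsupp_coeff_iff)
  then have "finsupp n (emult (coeff b) a)"
    using \<open>finite_coeffs a\<close> by (simp add: coeff_simps coeff_Abs_exterior flip: finsupp_coeff_iff)
  then have "emult (emult (coeff b) a) r \<in> rel_ideal n"
    using gen(2) by (rule rel_ideal.gen)
  then show ?case by (simp add: emult_assoc)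
next
  case (add p q)
  then show ?case by (simp add: emult_eadd_right rel_ideal.add)
qed

lemma E2_ideal_zero: "0 \<in> E2_ideal n"
  by (simp add: E2_ideal_def coeff_simps rel_ideal.zero)

lemma E2_ideal_add: "x \<in> E2_ideal n \<Longrightarrow> y \<in> E2_ideal n \<Longrightarrow> x + y \<in> E2_ideal n"
  by (simp add: E2_ideal_def coeff_simps rel_ideal.add)

lemma E2_ideal_uminus: "x \<in> E2_ideal n \<Longrightarrow> - x \<in> E2_ideal n"
  by (simp add: E2_ideal_def coeff_simps rel_ideal_uminus)

lemma E2_ideal_diff: "x \<in> E2_ideal n \<Longrightarrow> y \<in> E2_ideal n \<Longrightarrow> x - y \<in> E2_ideal n"
  unfolding diff_conv_add_uminus by (intro E2_ideal_add E2_ideal_uminus)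

lemma E2_ideal_mult_left: "x \<in> E2_ideal n \<Longrightarrow> supported n y \<Longrightarrow> y * x \<in> E2_ideal n"
  by (simp add: E2_ideal_def coeff_simps rel_ideal_mult_left)

lemma E2_ideal_sum: "(\<And>a. a \<in> A \<Longrightarrow> F a \<in> E2_ideal n) \<Longrightarrow> sum F A \<in> E2_ideal n"
  by (induction A rule: infinite_finite_induct) (auto simp: E2_ideal_zero E2_ideal_add)

lemma E2_ideal_relation: "coeff r \<in> rels n \<Longrightarrow> supported n y \<Longrightarrow> y * r \<in> E2_ideal n"
  by (simp add: E2_ideal_def coeff_simps rel_ideal.gen finsupp_coeff_iff)

lemma three_term_combination_in_ideal:
  assumes span: "ap \<in> gen_span" "aq \<in> gen_span" "ar \<in> gen_span" "br \<in> gen_span"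
    and supp: "supported n ap" "supported n aq" "supported n br"
    and sums: "(ap + aq + ar) * z \<in> E2_ideal n" "(bp + bq + br) * z \<in> E2_ideal n"
  shows "(ap * (ar * br) - ap * (aq * bq) + aq * (ap * bp)) * z \<in> E2_ideal n"
proof -
  have "ap + aq + ar \<in> gen_span" using span by (intro gen_span.add)
  then have "ap * (ar * br) - ap * (aq * bq) + aq * (ap * bp) =
      - (ap * (br * (ap + aq + ar))) - ap * (aq * (bp + bq + br))"
    using span by (intro three_term_identity gen_span_square gen_span_anticommute)
  then have "(ap * (ar * br) - ap * (aq * bq) + aq * (ap * bp)) * z =
      - (ap * (br * ((ap + aq + ar) * z))) - ap * (aq * ((bp + bq + br) * z))"
    by (simp add: left_diff_distrib mult.assoc)
  also have "\<dots> \<in> E2_ideal n"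
    by (intro E2_ideal_diff E2_ideal_uminus E2_ideal_mult_left supp sums)
  finally show ?thesis .
qed

section \<open>Circuits\<close>

definition edge_src :: "(nat \<times> nat) list \<Rightarrow> nat \<Rightarrow> nat" where
  "edge_src cs l = fst (cs ! (l - 1))"

definition edge_tgt :: "(nat \<times> nat) list \<Rightarrow> nat \<Rightarrow> nat" where
  "edge_tgt cs l = snd (cs ! (l - 1))"

definition omega_edge :: "(nat \<times> nat) list \<Rightarrow> nat \<Rightarrow> exterior" where
  "omega_edge cs l =
     generator (W (min (edge_src cs l) (edge_tgt cs l)) (max (edge_src cs l) (edge_tgt cs l)))"

definition edge_diff :: "(nat \<Rightarrow> gen) \<Rightarrow> (nat \<times> nat) list \<Rightarrow> nat \<Rightarrow> exterior" where
  "edge_diff V cs l = generator (V (edge_tgt cs l)) - generator (V (edge_src cs l))"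

definition d_omega_edge :: "(nat \<times> nat) list \<Rightarrow> nat \<Rightarrow> exterior" where
  "d_omega_edge cs l = edge_diff X cs l * edge_diff Y cs l"

lemma circuit_edge:
  assumes "circuit n cs" "l \<in> {1..length cs}"
  shows "edge_src cs l \<in> {1..n}" "edge_tgt cs l \<in> {1..n}" "edge_src cs l \<noteq> edge_tgt cs l"
proof -
  have "cs ! (l - 1) \<in> set cs" using assms(2) by auto
  then show "edge_src cs l \<in> {1..n}" "edge_tgt cs l \<in> {1..n}" "edge_src cs l \<noteq> edge_tgt cs l"
    using assms(1) by (auto simp: circuit_def edge_src_def edge_tgt_def)
qed

lemma circuit_telescope:
  fixes f :: "nat \<Rightarrow> 'a :: ab_group_add"
  assumes c: "circuit n cs"
  shows "(\<Sum>l\<in>{1..length cs}. f (edge_tgt cs l) - f (edge_src cs l)) = 0"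
proof -
  let ?k = "length cs"
  have k: "?k \<ge> 3" using c by (simp add: circuit_def)
  define next_edge where "next_edge l = (if l = ?k then 1 else Suc l)" for l
  have tgt_src: "edge_tgt cs l = edge_src cs (next_edge l)" if "l \<in> {1..?k}" for l
  proof (cases "l = ?k")
    case True
    then show ?thesis using c by (simp add: circuit_def next_edge_def edge_src_def edge_tgt_def)
  next
    case False
    then have "(l - 1) + 1 < ?k" using that by auto
    then have "snd (cs ! (l - 1)) = fst (cs ! ((l - 1) + 1))" using c unfolding circuit_def by blast
    then show ?thesis using False that by (simp add: next_edge_def edge_src_def edge_tgt_def)
  qed
  have "bij_betw next_edge {1..?k} {1..?k}"
    by (rule bij_betw_byWitness[where f'="\<lambda>l. if l = 1 then ?k else l - 1"])
      (use k in \<open>auto simp: next_edge_def\<close>)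
  then have "(\<Sum>l\<in>{1..?k}. f (edge_src cs (next_edge l))) = (\<Sum>l\<in>{1..?k}. f (edge_src cs l))"
    by (rule sum.reindex_bij_betw)
  then show ?thesis by (simp add: tgt_src sum_subtractf)
qed

lemma gen_span_edge_diff: "edge_diff V cs l \<in> gen_span"
  by (simp add: edge_diff_def gen_span_diff gen_span.generator)

lemma gen_span_omega_edge: "omega_edge cs l \<in> gen_span"
  by (simp add: omega_edge_def gen_span.generator)

lemma supported_edge_diff:
  assumes "circuit n cs" "l \<in> {1..length cs}" "V = X \<or> V = Y"
  shows "supported n (edge_diff V cs l)"
  using circuit_edge[OF assms(1,2)] assms(3)
  by (auto simp: edge_diff_def gens_def intro!: supported_diff supported_generator)

lemma supported_ordered_prod_omega_edge:
  assumes "circuit n cs" "U \<subseteq> {1..length cs}"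
  shows "supported n (ordered_prod (omega_edge cs) U)"
proof -
  have "supported n (omega_edge cs l)" if "l \<in> U" for l
    using circuit_edge[OF assms(1), of l] that assms(2)
    by (auto simp: omega_edge_def gens_def min_def max_def intro!: supported_generator)
  moreover have "finite U" using assms(2) finite_subset by blast
  ultimately show ?thesis
    unfolding ordered_prod_def by (intro supported_prod_list) auto
qed

lemma D2_omega_edge_mult:
  "D2 (omega_edge cs l * x) = d_omega_edge cs l * x - omega_edge cs l * D2 x"
  by (cases "edge_src cs l \<le> edge_tgt cs l")
    (simp_all add: omega_edge_def d_omega_edge_def edge_diff_def D2_generator_mult D2_gen_W
      min_def max_def algebra_simps)

lemma D2_edge_diff_mult:
  assumes "V = X \<or> V = Y"
  shows "D2 (edge_diff V cs l * x) = - (edge_diff V cs l * D2 x)"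
  using assms
  by (auto simp: edge_diff_def left_diff_distrib D2_diff D2_generator_mult D2_gen_X D2_gen_Y)

lemma omega_edge_commute_d_omega_edge:
  "omega_edge cs l' * d_omega_edge cs l = d_omega_edge cs l * omega_edge cs l'"
  unfolding d_omega_edge_def
  by (rule mult_commute_of_anticommute[symmetric])
    (intro gen_span_anticommute gen_span_edge_diff gen_span_omega_edge)+

lemma edge_diff_omega_edge_relation:
  assumes "circuit n cs" "l \<in> {1..length cs}" "V = X \<or> V = Y"
  shows "coeff (edge_diff V cs l * omega_edge cs l) \<in> rels n"
proof -
  let ?s = "edge_src cs l" and ?t = "edge_tgt cs l"
  have st: "?t \<in> {1..n}" "?s \<in> {1..n}" "?t \<noteq> ?s"
    using circuit_edge[OF assms(1,2)] by auto
  have "wg ?t ?s = coeff (omega_edge cs l)"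
    by (simp add: wg_def omega_edge_def coeff_generator min.commute max.commute)
  then show ?thesis
    using assms(3) st unfolding rels_def
    by (auto simp: edge_diff_def coeff_simps coeff_generator xg_def yg_def)
qed

lemma edge_diff_mult_ordered_prod_in_ideal:
  assumes c: "circuit n cs" and V: "V = X \<or> V = Y"
    and U: "U \<subseteq> {1..length cs}" "l \<in> U"
  shows "edge_diff V cs l * ordered_prod (omega_edge cs) U \<in> E2_ideal n"
proof -
  let ?w = "omega_edge cs" and ?e = "edge_diff V cs l"
  have anticomm: "?w i * ?w j = - (?w j * ?w i)" for i j
    by (intro gen_span_anticommute gen_span_omega_edge)
  have commute: "(?e * ?w l) * ?w j = ?w j * (?e * ?w l)" for j
    by (intro mult_commute_of_anticommute gen_span_anticommute gen_span_edge_diff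
        gen_span_omega_edge)
  have "finite U" using U finite_subset by blast
  then have "?e * ordered_prod ?w U = (-1) ^ count_below U l * ((?e * ?w l) * ordered_prod ?w (U - {l}))"
    by (simp add: ordered_prod_extract[OF _ U(2) anticomm] mult_neg1_power_left mult.assoc)
  also have "\<dots> = ((-1) ^ count_below U l * ordered_prod ?w (U - {l})) * (?e * ?w l)"
    by (subst ordered_prod_commute[OF commute]) (simp only: mult.assoc)
  also have "\<dots> \<in> E2_ideal n"
    using U by (intro E2_ideal_relation edge_diff_omega_edge_relation[OF c _ V] supported_mult
        supported_neg1_power supported_ordered_prod_omega_edge[OF c]) auto
  finally show ?thesis .
qed

lemma edge_diff_triple_sum_in_ideal:
  assumes c: "circuit n cs" and V: "V = X \<or> V = Y"
    and K: "p \<in> {1..length cs}" "q \<in> {1..length cs}" "r \<in> {1..length cs}"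
    and distinct: "p \<noteq> q" "q \<noteq> r" "p \<noteq> r"
  shows "(edge_diff V cs p + edge_diff V cs q + edge_diff V cs r) *
    ordered_prod (omega_edge cs) ({1..length cs} - {p, q, r}) \<in> E2_ideal n"
proof -
  let ?U = "{1..length cs} - {p, q, r}" and ?e = "edge_diff V cs"
  have "(\<Sum>l\<in>{1..length cs}. ?e l) = (\<Sum>l\<in>insert p (insert q (insert r ?U)). ?e l)"
    using K by (intro sum.cong) auto
  also have "\<dots> = ?e p + ?e q + ?e r + (\<Sum>l\<in>?U. ?e l)"
    using distinct by (simp add: add.assoc)
  finally have "(\<Sum>l\<in>{1..length cs}. ?e l) = ?e p + ?e q + ?e r + (\<Sum>l\<in>?U. ?e l)" .
  moreover have "(\<Sum>l\<in>{1..length cs}. ?e l) = 0"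
    using circuit_telescope[OF c, of "\<lambda>i. generator (V i)"] by (simp add: edge_diff_def)
  ultimately have "?e p + ?e q + ?e r = - (\<Sum>l\<in>?U. ?e l)"
    by (simp add: eq_neg_iff_add_eq_0)
  then have "(?e p + ?e q + ?e r) * ordered_prod (omega_edge cs) ?U =
      - (\<Sum>l\<in>?U. ?e l * ordered_prod (omega_edge cs) ?U)"
    by (simp add: sum_distrib_right)
  also have "\<dots> \<in> E2_ideal n"
    by (intro E2_ideal_uminus E2_ideal_sum edge_diff_mult_ordered_prod_in_ideal[OF c V]) auto
  finally show ?thesis .
qed

lemma circuit_triple_in_ideal:
  assumes c: "circuit n cs" and V: "V = X \<or> V = Y"
    and K: "p \<in> {1..length cs}" "q \<in> {1..length cs}" "r \<in> {1..length cs}"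
    and pqr: "p < q" "q < r"
  defines "z \<equiv> ordered_prod (omega_edge cs) ({1..length cs} - {p, q, r})"
  shows "edge_diff V cs p * (d_omega_edge cs r * z) - edge_diff V cs p * (d_omega_edge cs q * z)
    + edge_diff V cs q * (d_omega_edge cs p * z) \<in> E2_ideal n"
proof -
  let ?a = "edge_diff X cs" and ?b = "edge_diff Y cs"
  have span: "?a l \<in> gen_span" "?b l \<in> gen_span" for l
    by (simp_all add: gen_span_edge_diff)
  have supp: "supported n (?a l)" "supported n (?b l)" if "l \<in> {p, q, r}" for l
    using that K by (auto intro: supported_edge_diff[OF c])
  have sums: "(?a p + ?a q + ?a r) * z \<in> E2_ideal n" "(?b p + ?b q + ?b r) * z \<in> E2_ideal n"
    unfolding z_def by (rule edge_diff_triple_sum_in_ideal[OF c _ K]; use pqr in simp)+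
  from V show ?thesis
  proof
    assume "V = X"
    have "(?a p * (?a r * ?b r) - ?a p * (?a q * ?b q) + ?a q * (?a p * ?b p)) * z \<in> E2_ideal n"
      using span supp sums by (intro three_term_combination_in_ideal) auto
    then show ?thesis
      using \<open>V = X\<close> by (simp add: d_omega_edge_def algebra_simps)
  next
    assume "V = Y"
    \<comment> \<open>exchanging the roles of x and y negates \<open>d_omega_edge\<close>\<close>
    have swap: "d_omega_edge cs l = - (?b l * ?a l)" for l
      unfolding d_omega_edge_def by (intro gen_span_anticommute span)
    have "(?b p * (?b r * ?a r) - ?b p * (?b q * ?a q) + ?b q * (?b p * ?a p)) * z \<in> E2_ideal n"
      using span supp sums by (intro three_term_combination_in_ideal) (auto simp: add.commute)
    moreover have "?b p * (d_omega_edge cs r * z) - ?b p * (d_omega_edge cs q * z)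
        + ?b q * (d_omega_edge cs p * z) =
        - ((?b p * (?b r * ?a r) - ?b p * (?b q * ?a q) + ?b q * (?b p * ?a p)) * z)"
      by (simp add: swap algebra_simps)
    ultimately show ?thesis
      using \<open>V = Y\<close> by (simp add: E2_ideal_uminus)
  qed
qed

lemma circuit_triple_summands_in_ideal:
  assumes c: "circuit n cs" and V: "V = X \<or> V = Y"
    and K: "p \<in> {1..length cs}" "q \<in> {1..length cs}" "r \<in> {1..length cs}"
    and pqr: "p < q" "q < r"
  defines "h \<equiv> \<lambda>i j m. - ((-1) ^ (i + j + count_below ({1..length cs} - {i, j}) m) *
      (edge_diff V cs i * (d_omega_edge cs m * ordered_prod (omega_edge cs) ({1..length cs} - {i, j} - {m}))))"
  shows "h p q r + h p r q + h q r p \<in> E2_ideal n"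
proof -
  let ?K = "{1..length cs}" and ?e = "edge_diff V cs" and ?d = "d_omega_edge cs"
  let ?z = "ordered_prod (omega_edge cs) (?K - {p, q, r})"
  \<comment> \<open>the three summands of a triple carry consecutive signs\<close>
  define s where "s = p + q + (r - 3)"
  have "{p, q} \<inter> {..<r} = {p, q}" "{p, r} \<inter> {..<q} = {p}" "{q, r} \<inter> {..<p} = {}"
    using pqr by auto
  then have "p + q + count_below (?K - {p, q}) r = s"
    "p + r + count_below (?K - {p, r}) q = Suc s"
    "q + r + count_below (?K - {q, r}) p = Suc (Suc s)"
    using K pqr count_below_interval_diff[of r "length cs" "{p, q}"]
      count_below_interval_diff[of q "length cs" "{p, r}"]
      count_below_interval_diff[of p "length cs" "{q, r}"]
    by (simp_all add: s_def)
  moreover have "?K - {p, q} - {r} = ?K - {p, q, r}" "?K - {p, r} - {q} = ?K - {p, q, r}"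
    "?K - {q, r} - {p} = ?K - {p, q, r}"
    by auto
  ultimately have "h p q r + h p r q + h q r p =
      - ((-1) ^ s * (?e p * (?d r * ?z) - ?e p * (?d q * ?z) + ?e q * (?d p * ?z)))"
    by (simp add: h_def algebra_simps)
  also have "\<dots> \<in> E2_ideal n"
    using circuit_triple_in_ideal[OF c V K pqr]
    by (intro E2_ideal_uminus E2_ideal_mult_left supported_neg1_power)
  finally show ?thesis .
qed

lemma filter_upt_eq_sorted_list_of_set:
  "filter (\<lambda>m. m \<noteq> i \<and> m \<noteq> j) [1..<k + 1] = sorted_list_of_set ({1..k} - {i, j})"
proof -
  let ?xs = "filter (\<lambda>m. m \<noteq> i \<and> m \<noteq> j) [1..<k + 1]"
  have "set ?xs = {1..k} - {i, j}" by auto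
  moreover have "sorted ?xs" by (rule sorted_wrt_filter, rule sorted_upt)
  moreover have "distinct ?xs" by simp
  ultimately show ?thesis
    by (metis sorted_list_of_set_sort_remdups distinct_remdups_id sorted_sort_id)
qed

lemma omega_minus_eq:
  "omega_minus cs i j = coeff (ordered_prod (omega_edge cs) ({1..length cs} - {i, j}))"
proof -
  have "eprod (map (\<lambda>m. coeff (f m)) xs) = coeff (prod_list (map f xs))" for f :: "nat \<Rightarrow> exterior" and xs
    by (induction xs) (simp_all add: eprod_def coeff_simps)
  moreover have "wg (edge_src cs m) (edge_tgt cs m) = coeff (omega_edge cs m)" for m
    by (simp add: wg_def omega_edge_def coeff_generator)
  ultimately show ?thesis
    unfolding omega_minus_def ordered_prod_def filter_upt_eq_sorted_list_of_set
    by (simp add: edge_src_def edge_tgt_def)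
qed

lemma L_C_eq_coeff:
  "L_C (\<lambda>i. mon {V i}) cs = coeff (\<Sum>(i, j)\<in>{(i, j). i \<in> {1..length cs} \<and> j \<in> {1..length cs} \<and> i < j}.
     (-1) ^ (i + j) * (edge_diff V cs i * ordered_prod (omega_edge cs) ({1..length cs} - {i, j})))"
proof -
  have "esc ((-1) ^ (i + j)) (emult (esub (mon {V (snd (cs ! (i - 1)))}) (mon {V (fst (cs ! (i - 1)))}))
      (omega_minus cs i j)) =
    coeff ((-1) ^ (i + j) * (edge_diff V cs i * ordered_prod (omega_edge cs) ({1..length cs} - {i, j})))"
    for i j
    by (simp add: coeff_neg1_power_mult)
      (simp add: coeff_simps coeff_generator edge_diff_def edge_src_def edge_tgt_def omega_minus_eq)
  then show ?thesis
    unfolding L_C_def coeff_sum esum_def by (intro ext sum.cong) auto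
qed

lemma d2_L_C_in_rel_ideal:
  assumes c: "circuit n cs" and V: "V = X \<or> V = Y"
  shows "d2 (L_C (\<lambda>i. mon {V i}) cs) \<in> rel_ideal n"
proof -
  let ?K = "{1..length cs}"
  define h where "h i j m = - ((-1) ^ (i + j + count_below (?K - {i, j}) m) *
      (edge_diff V cs i * (d_omega_edge cs m * ordered_prod (omega_edge cs) (?K - {i, j} - {m}))))"
    for i j m
  have "d2 (L_C (\<lambda>i. mon {V i}) cs) =
      coeff (\<Sum>(i, j)\<in>{(i, j). i \<in> ?K \<and> j \<in> ?K \<and> i < j}. \<Sum>m\<in>?K - {i, j}. h i j m)"
    unfolding L_C_eq_coeff coeff_D2[symmetric] h_def
    by (simp add: D2_alternating_sum D2_omega_edge_mult omega_edge_commute_d_omega_edge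
        D2_edge_diff_mult[OF V])
  also have "\<dots> = coeff (\<Sum>(p, q, r)\<in>{(p, q, r). p \<in> ?K \<and> q \<in> ?K \<and> r \<in> ?K \<and> p < q \<and> q < r}.
      h p q r + h p r q + h q r p)"
    by (simp only: sum_pairs_third_regroup[OF finite_atLeastAtMost])
  also have "\<dots> \<in> coeff ` E2_ideal n"
  proof (rule imageI, rule E2_ideal_sum)
    fix t assume "t \<in> {(p, q, r). p \<in> ?K \<and> q \<in> ?K \<and> r \<in> ?K \<and> p < q \<and> q < r}"
    then obtain p q r where "t = (p, q, r)" "p \<in> ?K" "q \<in> ?K" "r \<in> ?K" "p < q" "q < r"
      by auto
    then show "(case t of (p, q, r) \<Rightarrow> h p q r + h p r q + h q r p) \<in> E2_ideal n"
      using circuit_triple_summands_in_ideal[OF c V, of p q r] by (simp add: h_def)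
  qed
  finally show ?thesis by (auto simp: E2_ideal_def)
qed

theorem theorem2p5:
  fixes n :: nat and cs :: "(nat \<times> nat) list"
  assumes "n \<ge> 3" and "circuit n cs"
  shows "d2 (L_C xg cs) \<in> rel_ideal n \<and> d2 (L_C yg cs) \<in> rel_ideal n"
proof -
  \<comment> \<open>\<open>n \<ge> 3\<close> is implied by \<open>circuit n cs\<close> and not needed\<close>
  have "xg = (\<lambda>i. mon {X i})" and "yg = (\<lambda>i. mon {Y i})"
    by (simp_all add: fun_eq_iff xg_def yg_def)
  then show ?thesis
    using d2_L_C_in_rel_ideal[OF assms(2), of X] d2_L_C_in_rel_ideal[OF assms(2), of Y] by simp
qed

end
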